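(* Consider binary classification on $\mathcal{X}=\{x\in\mathbb{R}^2:\|x\|\le1\}$ with $x$ uniformly distributed on $\mathcal{X}$ and hypothesis class $\mathcal{H}=\{h_w:h_w(x)=\mathrm{sgn}(x^{\top}w),\ w\in\mathbb{R}^2\}$. Let $g=h_v$ and let $h=h_w$ be sampled with $w\sim\mathcal{N}(v,\sigma^2 I)$. Then $\mathbb{E}_w[\rho(h,g)]$ is continuous and strictly increasing in $\sigma>0$.
   Context: $\rho(h_1,h_2)=\mathbb{P}_X[h_1(X)\neq h_2(X)]$ with $X$ uniform on $\mathcal{X}$. *)

theory Defs
  imports "HOL-Probability.Probability"
begin

definition X_dom :: "(real \<times> real) set" where
  "X_dom = cball 0 1"

definition hyp :: "real \<times> real \<Rightarrow> real \<times> real \<Rightarrow> real" where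
  "hyp w x = sgn (x \<bullet> w)"

definition rho :: "(real \<times> real \<Rightarrow> real) \<Rightarrow> (real \<times> real \<Rightarrow> real) \<Rightarrow> real" where
  "rho h1 h2 = measure (uniform_measure lborel X_dom) {x \<in> X_dom. h1 x \<noteq> h2 x}"

definition gauss2 :: "real \<times> real \<Rightarrow> real \<Rightarrow> (real \<times> real) measure" where
  "gauss2 v \<sigma> = density lborel
     (\<lambda>w. ennreal (normal_density (fst v) \<sigma> (fst w) * normal_density (snd v) \<sigma> (snd w)))"

definition exp_disagree :: "real \<times> real \<Rightarrow> real \<Rightarrow> real" where
  "exp_disagree v \<sigma> = (\<integral>w. rho (hyp w) (hyp v) \<partial>(gauss2 v \<sigma>))"

end

(*
  Substituting w = v + \<sigma> z with z standard normal turns the expectation into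
  E_z[rho(h_(v + \<sigma> z), h_v)].  For fixed z the disagreement region of h_(v + \<sigma> z) and h_v
  can only grow with \<sigma>, since x \<bullet> (v + \<sigma> z) changes sign at most once as \<sigma> increases.
  If z is not parallel to v it grows strictly, by an open wedge of the disk, and such z
  form an open set of positive Gaussian measure; hence strict monotonicity.  Continuity
  follows by dominated convergence, because w \<mapsto> rho(h_w, h_v) is continuous off w = 0,
  the lines x \<bullet> w = 0 being null sets.
*)
theory Submission
  imports Defs
begin

lemma sgn_add_mult_neq_mono:
  fixes a b s t :: real
  assumes "0 < s" "s \<le> t" "sgn (a + s * b) \<noteq> sgn a"
  shows "sgn (a + t * b) \<noteq> sgn a"
proof -
  consider "0 < s * b" "s * b \<le> t * b" | "s * b < 0" "t * b \<le> s * b" | "b = 0"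
    using assms(1,2) by (cases b "0::real" rule: linorder_cases) (auto simp: mult_pos_neg)
  then show ?thesis
    using assms(3) by cases (auto simp: sgn_if split: if_splits)
qed

lemma exists_inner_eq_pair:
  fixes a b :: "real \<times> real"
  assumes "fst a * snd b - snd a * fst b \<noteq> 0"
  obtains y where "y \<bullet> a = p" "y \<bullet> b = q"
proof
  let ?d = "fst a * snd b - snd a * fst b"
  let ?y = "((p * snd b - q * snd a) / ?d, (q * fst a - p * fst b) / ?d)"
  have "(p * snd b - q * snd a) * fst a + (q * fst a - p * fst b) * snd a = p * ?d"
    and "(p * snd b - q * snd a) * fst b + (q * fst a - p * fst b) * snd b = q * ?d"
    by algebra+
  then show "?y \<bullet> a = p" "?y \<bullet> b = q"
    using assms by (simp_all add: inner_prod_def add_divide_distrib[symmetric])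
qed

lemma emeasure_lborel_open_pos:
  fixes U :: "'a::euclidean_space set"
  assumes "open U" "U \<noteq> {}"
  shows "0 < emeasure lborel U"
proof -
  obtain x e where "e > 0" "ball x e \<subseteq> U"
    using assms open_contains_ball by blast
  then have "emeasure lborel (ball x e) \<le> emeasure lborel U"
    using assms by (intro emeasure_mono) auto
  moreover have "0 < emeasure lborel (ball x e)"
    using content_ball_pos[OF \<open>e > 0\<close>, of x] emeasure_lborel_ball_finite[of x e]
    by (simp add: emeasure_eq_ennreal_measure)
  ultimately show ?thesis by simp
qed

lemma density_lborel_affine:
  fixes f :: "'a::euclidean_space \<Rightarrow> ennreal"
  assumes [measurable]: "f \<in> borel_measurable borel" and "c \<noteq> 0"
  shows "density lborel f
    = distr (density lborel (\<lambda>z. ennreal (\<bar>c\<bar> ^ DIM('a)) * f (t + c *\<^sub>R z))) borel (\<lambda>z. t + c *\<^sub>R z)"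
proof -
  have "density lborel f = density (density (distr lborel borel (\<lambda>z. t + c *\<^sub>R z)) (\<lambda>_. ennreal (\<bar>c\<bar> ^ DIM('a)))) f"
    using lborel_affine[OF \<open>c \<noteq> 0\<close>, of t] by (rule arg_cong)
  also have "\<dots> = density (distr lborel borel (\<lambda>z. t + c *\<^sub>R z)) (\<lambda>x. ennreal (\<bar>c\<bar> ^ DIM('a)) * f x)"
    by (simp add: density_density_eq)
  also have "\<dots> = distr (density lborel (\<lambda>z. ennreal (\<bar>c\<bar> ^ DIM('a)) * f (t + c *\<^sub>R z))) borel (\<lambda>z. t + c *\<^sub>R z)"
    by (rule density_distr) auto
  finally show ?thesis .
qed

lemma integral_density_pos_if_pos_on_open:
  fixes f g :: "'a::euclidean_space \<Rightarrow> real"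
  assumes [measurable]: "g \<in> borel_measurable borel" and "\<And>x. 0 < g x"
    and "integrable (density lborel g) f" "\<And>x. 0 \<le> f x"
    and "open U" "U \<noteq> {}" "\<And>x. x \<in> U \<Longrightarrow> 0 < f x"
  shows "0 < (\<integral>x. f x \<partial>density lborel g)"
proof (rule ccontr)
  assume "\<not> 0 < (\<integral>x. f x \<partial>density lborel g)"
  moreover have "0 \<le> (\<integral>x. f x \<partial>density lborel g)"
    using assms(4) by simp
  ultimately have "(\<integral>x. f x \<partial>density lborel g) = 0"
    by simp
  then have "AE x in density lborel g. f x = 0"
    using integral_nonneg_eq_0_iff_AE[OF assms(3)] assms(4) by (simp add: AE_I2)
  then have "AE x in lborel. f x = 0"
    using assms(2) by (simp add: AE_density)
  then have "AE x in lborel. x \<notin> U"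
    by eventually_elim (use assms(7) in force)
  then have "U \<in> null_sets lborel"
    using \<open>open U\<close> by (subst AE_iff_null_sets) (auto simp: borel_open)
  then show False
    using emeasure_lborel_open_pos[OF \<open>open U\<close> \<open>U \<noteq> {}\<close>] by (simp add: null_sets_def)
qed

lemma isCont_integral_bounded:
  fixes f :: "'p::{first_countable_topology, t2_space} \<Rightarrow> 'a \<Rightarrow> real"
  assumes "finite_measure M" "\<And>p. f p \<in> borel_measurable M" "\<And>p x. \<bar>f p x\<bar> \<le> B"
    and "AE x in M. isCont (\<lambda>p. f p x) p0"
  shows "isCont (\<lambda>p. \<integral>x. f p x \<partial>M) p0"
proof (rule continuous_at_sequentiallyI)
  interpret finite_measure M by fact
  fix u assume "u \<longlonglongrightarrow> p0"
  show "(\<lambda>n. \<integral>x. f (u n) x \<partial>M) \<longlonglongrightarrow> (\<integral>x. f p0 x \<partial>M)"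
  proof (rule integral_dominated_convergence[where w="\<lambda>_. B"])
    show "AE x in M. (\<lambda>n. f (u n) x) \<longlonglongrightarrow> f p0 x"
      using assms(4) by eventually_elim (rule isCont_tendsto_compose[OF _ \<open>u \<longlonglongrightarrow> p0\<close>])
  qed (use assms(2,3) in auto)
qed

lemma normal_density_affine_std:
  "0 < \<sigma> \<Longrightarrow> \<sigma> * normal_density \<mu> \<sigma> (\<mu> + \<sigma> * x) = std_normal_density x"
  unfolding normal_density_def by (simp add: real_sqrt_mult power_mult_distrib field_simps)

lemma borel_measurable_normal_density_pair[measurable]:
  "(\<lambda>w::real \<times> real. normal_density \<mu> \<sigma> (fst w) * normal_density \<mu>' \<sigma> (snd w)) \<in> borel_measurable borel"
proof -
  have "fst \<in> borel_measurable (borel :: (real \<times> real) measure)"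
    and "snd \<in> borel_measurable (borel :: (real \<times> real) measure)"
    by (intro borel_measurable_continuous_onI continuous_intros)+
  then show ?thesis
    by (intro borel_measurable_times measurable_compose[OF _ borel_measurable_normal_density])
qed

lemma gauss2_eq_pair_measure:
  assumes "0 < \<sigma>"
  shows "gauss2 v \<sigma>
    = density lborel (normal_density (fst v) \<sigma>) \<Otimes>\<^sub>M density lborel (normal_density (snd v) \<sigma>)"
proof -
  have "sigma_finite_measure (density lborel (normal_density \<mu> \<sigma>))" for \<mu>
  proof -
    interpret prob_space "density lborel (normal_density \<mu> \<sigma>)"
      using assms by (rule prob_space_normal_density)
    show ?thesis by unfold_locales
  qed
  then have "density lborel (normal_density (fst v) \<sigma>) \<Otimes>\<^sub>M density lborel (normal_density (snd v) \<sigma>)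
    = density (lborel \<Otimes>\<^sub>M lborel)
        (\<lambda>(x, y). ennreal (normal_density (fst v) \<sigma> x) * ennreal (normal_density (snd v) \<sigma> y))"
    by (intro pair_measure_density) (auto intro: lborel.sigma_finite_measure_axioms)
  then show ?thesis
    unfolding gauss2_def lborel_prod
    by (simp add: case_prod_beta' ennreal_mult)
qed

lemma prob_space_gauss2: "0 < \<sigma> \<Longrightarrow> prob_space (gauss2 v \<sigma>)"
  unfolding gauss2_eq_pair_measure by (intro prob_space_pair prob_space_normal_density)

lemma gauss2_eq_distr_std:
  assumes "0 < \<sigma>"
  shows "gauss2 v \<sigma> = distr (gauss2 0 1) borel (\<lambda>z. v + \<sigma> *\<^sub>R z)"
proof -
  have "\<sigma> * \<sigma> * (normal_density (fst v) \<sigma> (fst v + \<sigma> * fst z) * normal_density (snd v) \<sigma> (snd v + \<sigma> * snd z))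
      = (\<sigma> * normal_density (fst v) \<sigma> (fst v + \<sigma> * fst z)) * (\<sigma> * normal_density (snd v) \<sigma> (snd v + \<sigma> * snd z))"
    for z by (simp add: mult_ac)
  then have "(\<lambda>z. ennreal (\<bar>\<sigma>\<bar> ^ DIM(real \<times> real))
      * ennreal (normal_density (fst v) \<sigma> (fst (v + \<sigma> *\<^sub>R z)) * normal_density (snd v) \<sigma> (snd (v + \<sigma> *\<^sub>R z))))
    = (\<lambda>z. ennreal (std_normal_density (fst z) * std_normal_density (snd z)))"
    using assms by (simp add: ennreal_mult'[symmetric] power2_eq_square normal_density_affine_std)
  moreover have "gauss2 v \<sigma> = distr (density lborel (\<lambda>z. ennreal (\<bar>\<sigma>\<bar> ^ DIM(real \<times> real))
      * ennreal (normal_density (fst v) \<sigma> (fst (v + \<sigma> *\<^sub>R z)) * normal_density (snd v) \<sigma> (snd (v + \<sigma> *\<^sub>R z)))))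
      borel (\<lambda>z. v + \<sigma> *\<^sub>R z)"
    unfolding gauss2_def using assms by (intro density_lborel_affine) auto
  ultimately show ?thesis
    by (simp add: gauss2_def)
qed

lemma sets_gauss2[measurable_cong, simp]: "sets (gauss2 v \<sigma>) = sets borel"
  by (simp add: gauss2_def)

abbreviation uniform_disk :: "(real \<times> real) measure" where
  "uniform_disk \<equiv> uniform_measure lborel X_dom"

definition disagreement :: "real \<times> real \<Rightarrow> real \<times> real \<Rightarrow> (real \<times> real) set" where
  "disagreement v w = {x \<in> X_dom. hyp w x \<noteq> hyp v x}"

lemma rho_hyp_eq_measure_disagreement:
  "rho (hyp w) (hyp v) = measure uniform_disk (disagreement v w)"
  unfolding rho_def disagreement_def ..

lemma sets_disagreement[measurable]: "disagreement v w \<in> sets borel"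
proof -
  have sgn_inner: "(\<lambda>x::real \<times> real. sgn (x \<bullet> u)) \<in> borel_measurable borel" for u
    by (intro measurable_compose[OF _ borel_measurable_sgn] borel_measurable_continuous_onI continuous_intros)
  have "disagreement v w = X_dom \<inter> {x \<in> space borel. sgn (x \<bullet> w) \<noteq> sgn (x \<bullet> v)}"
    by (auto simp: disagreement_def hyp_def)
  then show ?thesis
    using borel_measurable_neq[OF sgn_inner sgn_inner] by (simp add: X_dom_def)
qed

lemma emeasure_lborel_X_dom_finite: "emeasure lborel X_dom < \<infinity>"
  unfolding X_dom_def by (rule emeasure_lborel_cball_finite)

lemma prob_space_uniform_disk: "prob_space uniform_disk"
proof (rule prob_space_uniform_measure)
  have "0 < emeasure lborel (ball (0::real \<times> real) 1)"
    by (rule emeasure_lborel_open_pos) auto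
  also have "\<dots> \<le> emeasure lborel X_dom"
    by (intro emeasure_mono) (auto simp: X_dom_def)
  finally show "emeasure lborel X_dom \<noteq> 0" by simp
  show "emeasure lborel X_dom \<noteq> \<infinity>"
    using emeasure_lborel_X_dom_finite by simp
qed

lemma measure_uniform_disk_open_pos:
  assumes "open A" "A \<noteq> {}" "A \<subseteq> X_dom"
  shows "0 < measure uniform_disk A"
proof -
  interpret prob_space uniform_disk by (rule prob_space_uniform_disk)
  have "X_dom \<in> sets lborel" "A \<in> sets lborel"
    using \<open>open A\<close> by (auto simp: X_dom_def)
  then have "0 < emeasure uniform_disk A"
    using emeasure_lborel_open_pos[OF assms(1,2)] emeasure_lborel_X_dom_finite \<open>A \<subseteq> X_dom\<close>
    by (simp add: Int_absorb1 ennreal_zero_less_divide)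
  then show ?thesis
    by (simp add: emeasure_eq_measure)
qed

lemma rho_hyp_bounded: "\<bar>rho (hyp w) (hyp v)\<bar> \<le> 1"
proof -
  interpret prob_space uniform_disk by (rule prob_space_uniform_disk)
  show ?thesis unfolding rho_hyp_eq_measure_disagreement by simp
qed

lemma disagreement_mono_ray:
  "0 < s \<Longrightarrow> s \<le> t \<Longrightarrow> disagreement v (v + s *\<^sub>R z) \<subseteq> disagreement v (v + t *\<^sub>R z)"
  unfolding disagreement_def hyp_def
  using sgn_add_mult_neq_mono[of s t "_ \<bullet> v" "_ \<bullet> z"] by (auto simp: inner_add_right)

lemma rho_hyp_mono_ray:
  assumes "0 < s" "s \<le> t"
  shows "rho (hyp (v + s *\<^sub>R z)) (hyp v) \<le> rho (hyp (v + t *\<^sub>R z)) (hyp v)"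
proof -
  interpret prob_space uniform_disk by (rule prob_space_uniform_disk)
  show ?thesis unfolding rho_hyp_eq_measure_disagreement
    using disagreement_mono_ray[OF assms] by (intro finite_measure_mono) auto
qed

lemma exists_sign_change_in_disk:
  fixes v z :: "real \<times> real"
  assumes "0 < s" "s < t" and "fst v * snd z - snd v * fst z \<noteq> 0"
  obtains x where "norm x < 1" "0 < x \<bullet> v" "0 < x \<bullet> (v + s *\<^sub>R z)" "x \<bullet> (v + t *\<^sub>R z) < 0"
proof -
  \<comment> \<open>y \<bullet> (v + \<tau> z) = 1 - 2 \<tau> / (s + t) changes sign at the midpoint of s and t\<close>
  define b where "b = - 2 / (s + t)"
  obtain y where y: "y \<bullet> v = 1" "y \<bullet> z = b"
    using exists_inner_eq_pair[OF assms(3)] by blast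
  define c where "c = 1 / (norm y + 1)"
  have "0 < norm y + 1"
    by (simp add: add_nonneg_pos)
  then have c: "c > 0" "norm (c *\<^sub>R y) < 1"
    unfolding c_def by (auto simp: divide_less_eq)
  have inner_ray: "(c *\<^sub>R y) \<bullet> (v + \<tau> *\<^sub>R z) = c * (1 + \<tau> * b)" for \<tau>
    using y by (simp add: inner_add_right algebra_simps)
  have "1 + s * b > 0" "1 + t * b < 0"
    using assms(1,2) unfolding b_def by (auto simp: field_simps)
  then show ?thesis
    using c inner_ray[of 0] inner_ray[of s] inner_ray[of t] by (intro that[of "c *\<^sub>R y"]) (simp_all add: mult_pos_neg)
qed

lemma rho_hyp_strict_mono_ray:
  assumes "0 < s" "s < t" and "fst v * snd z - snd v * fst z \<noteq> 0"
  shows "rho (hyp (v + s *\<^sub>R z)) (hyp v) < rho (hyp (v + t *\<^sub>R z)) (hyp v)"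
proof -
  interpret prob_space uniform_disk by (rule prob_space_uniform_disk)
  let ?Ds = "disagreement v (v + s *\<^sub>R z)" and ?Dt = "disagreement v (v + t *\<^sub>R z)"
  let ?O = "{x. norm x < 1 \<and> 0 < x \<bullet> v \<and> 0 < x \<bullet> (v + s *\<^sub>R z) \<and> x \<bullet> (v + t *\<^sub>R z) < 0}"
  obtain y where y_in_O: "y \<in> ?O"
    using exists_sign_change_in_disk[OF assms] by blast
  have O_sub: "?O \<subseteq> X_dom"
    by (auto simp: X_dom_def)
  have "open ?O"
    by (intro open_Collect_conj open_Collect_less continuous_intros)
  then have "0 < measure uniform_disk ?O"
    by (rule measure_uniform_disk_open_pos[OF _ _ O_sub]) (use y_in_O in blast)
  also have "\<dots> \<le> measure uniform_disk (?Dt - ?Ds)"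
  proof (rule finite_measure_mono)
    show "?O \<subseteq> ?Dt - ?Ds"
    proof
      fix x assume "x \<in> ?O"
      then have "sgn (x \<bullet> v) = 1" "sgn (x \<bullet> (v + s *\<^sub>R z)) = 1" "sgn (x \<bullet> (v + t *\<^sub>R z)) = - 1"
        by (simp_all add: sgn_1_pos sgn_1_neg)
      with \<open>x \<in> ?O\<close> O_sub show "x \<in> ?Dt - ?Ds"
        by (auto simp: disagreement_def hyp_def)
    qed
  qed simp
  also have "\<dots> = measure uniform_disk ?Dt - measure uniform_disk ?Ds"
    using disagreement_mono_ray[OF assms(1) less_imp_le[OF assms(2)]] by (intro finite_measure_Diff) auto
  finally show ?thesis
    unfolding rho_hyp_eq_measure_disagreement by simp
qed

lemma AE_lborel_inner_neq_0:
  fixes w :: "'a::euclidean_space"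
  assumes "w \<noteq> 0"
  shows "AE x in lborel. x \<bullet> w \<noteq> 0"
proof -
  have "negligible {x. w \<bullet> x = 0}"
    using assms by (intro negligible_hyperplane) simp
  then have "AE x in lebesgue. x \<notin> {x. w \<bullet> x = 0}"
    unfolding negligible_iff_null_sets by (rule AE_not_in)
  then show ?thesis
    unfolding AE_completion_iff by (simp add: inner_commute)
qed

lemma isCont_rho_hyp:
  assumes "w0 \<noteq> 0"
  shows "isCont (\<lambda>w. rho (hyp w) (hyp v)) w0"
proof -
  interpret prob_space uniform_disk by (rule prob_space_uniform_disk)
  have ae_cont: "AE x in uniform_disk. isCont (\<lambda>w. indicator (disagreement v w) x :: real) w0"
  proof (rule AE_uniform_measureI)
    show "AE x in lborel. x \<in> X_dom \<longrightarrow> isCont (\<lambda>w. indicator (disagreement v w) x :: real) w0"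
      using AE_lborel_inner_neq_0[OF assms]
    proof eventually_elim
      case (elim x)
      have lim: "((\<lambda>w. x \<bullet> w) \<longlongrightarrow> x \<bullet> w0) (at w0)"
        by (intro tendsto_intros)
      consider "0 < x \<bullet> w0" | "x \<bullet> w0 < 0"
        using elim by linarith
      then have "eventually (\<lambda>w. sgn (x \<bullet> w) = sgn (x \<bullet> w0)) (at w0)"
      proof cases
        case 1
        show ?thesis by (rule eventually_mono[OF order_tendstoD(1)[OF lim 1]]) (simp add: 1)
      next
        case 2
        show ?thesis by (rule eventually_mono[OF order_tendstoD(2)[OF lim 2]]) (simp add: 2)
      qed
      then have "eventually (\<lambda>w. indicator (disagreement v w) x = (indicator (disagreement v w0) x :: real)) (at w0)"
        by eventually_elim (simp add: disagreement_def hyp_def indicator_def)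
      then show ?case
        by (simp add: isCont_def tendsto_eventually)
    qed
  qed (simp add: X_dom_def)
  have "isCont (\<lambda>w. \<integral>x. (indicator (disagreement v w) x :: real) \<partial>uniform_disk) w0"
    by (rule isCont_integral_bounded[where B = 1, OF finite_measure_axioms _ _ ae_cont]) auto
  then show ?thesis
    unfolding rho_hyp_eq_measure_disagreement by simp
qed

lemma borel_measurable_rho_hyp[measurable]: "(\<lambda>w. rho (hyp w) (hyp v)) \<in> borel_measurable borel"
  by (rule borel_measurable_continuous_countable_exceptions[of "{0}"])
    (simp_all add: continuous_at_imp_continuous_on isCont_rho_hyp)

lemma exp_disagree_eq_integral_std:
  assumes "0 < \<sigma>"
  shows "exp_disagree v \<sigma> = (\<integral>z. rho (hyp (v + \<sigma> *\<^sub>R z)) (hyp v) \<partial>gauss2 0 1)"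
proof -
  have "(\<lambda>z. v + \<sigma> *\<^sub>R z) \<in> measurable (gauss2 0 1) borel"
    by measurable
  then show ?thesis
    unfolding exp_disagree_def gauss2_eq_distr_std[OF assms] by (rule integral_distr) measurable
qed

lemma integrable_rho_hyp_ray:
  "integrable (gauss2 0 1) (\<lambda>z. rho (hyp (v + \<sigma> *\<^sub>R z)) (hyp v))"
proof -
  interpret prob_space "gauss2 0 1" by (rule prob_space_gauss2) simp
  show ?thesis
    by (rule integrable_const_bound[where B=1]) (simp_all add: rho_hyp_bounded)
qed

lemma isCont_integral_rho_hyp_ray:
  assumes "0 < \<sigma>0"
  shows "isCont (\<lambda>\<sigma>. \<integral>z. rho (hyp (v + \<sigma> *\<^sub>R z)) (hyp v) \<partial>gauss2 0 1) \<sigma>0"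
proof (rule isCont_integral_bounded[where B=1])
  show "finite_measure (gauss2 0 1)"
    using prob_space_gauss2[of 1 0] by (simp add: prob_space_def)
  show "(\<lambda>z. rho (hyp (v + \<sigma> *\<^sub>R z)) (hyp v)) \<in> borel_measurable (gauss2 0 1)" for \<sigma>
    by measurable
  show "\<bar>rho (hyp (v + \<sigma> *\<^sub>R z)) (hyp v)\<bar> \<le> 1" for \<sigma> z
    by (rule rho_hyp_bounded)
  \<comment> \<open>rho (hyp w) (hyp v) is continuous off w = 0, and v + \<sigma>0 z = 0 only for z = - v / \<sigma>0\<close>
  have "AE z in lborel. isCont (\<lambda>\<sigma>. rho (hyp (v + \<sigma> *\<^sub>R z)) (hyp v)) \<sigma>0"
    using AE_lborel_singleton[of "- (1 / \<sigma>0) *\<^sub>R v"]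
  proof eventually_elim
    case (elim z)
    have "v + \<sigma>0 *\<^sub>R z \<noteq> 0"
    proof
      assume "v + \<sigma>0 *\<^sub>R z = 0"
      then have "\<sigma>0 *\<^sub>R z = - v"
        by (simp add: eq_neg_iff_add_eq_0 add.commute)
      have "z = (1 / \<sigma>0) *\<^sub>R (\<sigma>0 *\<^sub>R z)"
        using assms by simp
      also have "\<dots> = - (1 / \<sigma>0) *\<^sub>R v"
        using \<open>\<sigma>0 *\<^sub>R z = - v\<close> by simp
      finally show False
        using elim by simp
    qed
    then show ?case
      by (intro continuous_intros isCont_o2[OF _ isCont_rho_hyp]) auto
  qed
  then show "AE z in gauss2 0 1. isCont (\<lambda>\<sigma>. rho (hyp (v + \<sigma> *\<^sub>R z)) (hyp v)) \<sigma>0"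
    unfolding gauss2_def by (subst AE_density) (auto elim: AE_mp)
qed

lemma integral_rho_hyp_ray_strict_mono:
  assumes "v \<noteq> 0" "0 < r" "r < s"
  shows "(\<integral>z. rho (hyp (v + r *\<^sub>R z)) (hyp v) \<partial>gauss2 0 1) < (\<integral>z. rho (hyp (v + s *\<^sub>R z)) (hyp v) \<partial>gauss2 0 1)"
proof -
  let ?D = "\<lambda>z. rho (hyp (v + s *\<^sub>R z)) (hyp v) - rho (hyp (v + r *\<^sub>R z)) (hyp v)"
  let ?U = "{z. fst v * snd z - snd v * fst z \<noteq> 0}"
  have "fst v * fst v + snd v * snd v > 0"
    using assms(1) by (simp add: prod_eq_iff sum_power2_gt_zero_iff power2_eq_square[symmetric])
  then have "(- snd v, fst v) \<in> ?U"
    by simp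
  have pos: "0 < (\<integral>z. ?D z \<partial>gauss2 0 1)"
    unfolding gauss2_def fst_zero snd_zero
  proof (rule integral_density_pos_if_pos_on_open[where U = ?U])
    show "0 < std_normal_density (fst z) * std_normal_density (snd z)" for z
      by (simp add: normal_density_pos)
    show "integrable (density lborel (\<lambda>z. ennreal (std_normal_density (fst z) * std_normal_density (snd z)))) ?D"
      by (intro Bochner_Integration.integrable_diff integrable_rho_hyp_ray[unfolded gauss2_def fst_zero snd_zero])
    show "0 \<le> ?D z" for z
      using rho_hyp_mono_ray[of r s v z] assms(2,3) by simp
    show "0 < ?D z" if "z \<in> ?U" for z
      using rho_hyp_strict_mono_ray[of r s v z] assms(2,3) that by simp
    show "open ?U"
      by (intro open_Collect_neq continuous_intros)
    show "?U \<noteq> {}"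
      using \<open>(- snd v, fst v) \<in> ?U\<close> by blast
  qed simp
  moreover have "(\<integral>z. ?D z \<partial>gauss2 0 1)
      = (\<integral>z. rho (hyp (v + s *\<^sub>R z)) (hyp v) \<partial>gauss2 0 1) - (\<integral>z. rho (hyp (v + r *\<^sub>R z)) (hyp v) \<partial>gauss2 0 1)"
    by (intro Bochner_Integration.integral_diff integrable_rho_hyp_ray)
  ultimately show ?thesis
    by simp
qed

theorem proposition2:
  fixes v :: "real \<times> real"
  assumes "v \<noteq> 0"
  shows "continuous_on {0<..} (exp_disagree v) \<and> strict_mono_on {0<..} (exp_disagree v)"
proof
  define F where "F \<sigma> = (\<integral>z. rho (hyp (v + \<sigma> *\<^sub>R z)) (hyp v) \<partial>gauss2 0 1)" for \<sigma>
  have exp_disagree_eq: "exp_disagree v \<sigma> = F \<sigma>" if "0 < \<sigma>" for \<sigma>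
    unfolding F_def using that by (rule exp_disagree_eq_integral_std)
  have "continuous_on {0<..} F"
    unfolding F_def by (intro continuous_at_imp_continuous_on ballI isCont_integral_rho_hyp_ray) simp
  then show "continuous_on {0<..} (exp_disagree v)"
    by (rule continuous_on_cong[THEN iffD1, rotated 2]) (simp_all add: exp_disagree_eq)
  show "strict_mono_on {0<..} (exp_disagree v)"
    by (rule strict_mono_onI)
      (simp add: exp_disagree_eq F_def integral_rho_hyp_ray_strict_mono[OF assms])
qed

end
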